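(* Let $F$ be a recurrent set and let $X\subset F$ be a bifix code. Then $X$ is an $F$-thin and $F$-maximal bifix code if and only if its $F$-degree $d_F(X)$ is finite. In this case the set $I(X)$ of internal factors of $X$ satisfies $I(X)=\{w\in F\mid \delta_X(w)<d_F(X)\}$.
   Context: $A$ is a finite alphabet. A set $F\subset A^*$ is recurrent if it is nonempty, contains all factors of its elements, and for all $u,w\in F$ there is $v\in F$ with $uvw\in F$. A bifix code is a set $X\subset A^+$ such that no element is a proper prefix or a proper suffix of another element. For $X\subset F$, $X$ is an $F$-maximal bifix code if it is not properly contained in any bifix code $Y\subset F$, and $F$-thin if some word of $F$ is not a factor of a word of $X$. A parse of a word $w$ with respect to $X$ is a triple $(v,x,u)$ with $w=vxu$, $v\in A^*\setminus A^*X$ (no suffix of $v$ lies in $X$), $x\in X^*$, $u\in A^*\setminus XA^*$ (no prefix of $u$ lies in $X$); $\delta_X(w)$ is the number of parses of $w$. The $F$-degree is $d_F(X)=\max_{w\in F}\delta_X(w)$ (possibly infinite). $I(X)=\{w\in A^*\mid A^+wA^+\cap X\ne\emptyset\}$. *)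

theory Defs
  imports Main "HOL-Library.Extended_Nat"
begin

text \<open>Words over an alphabet of type 'a are lists; the alphabet A is a finite set of letters.
  A^* is lists A, A^+ is lists A minus the empty word.\<close>

definition factors_of :: "'a list set \<Rightarrow> 'a list set" where
  "factors_of S = {u. \<exists>w\<in>S. \<exists>p s. w = p @ u @ s}"

definition recurrent :: "'a set \<Rightarrow> 'a list set \<Rightarrow> bool" where
  "recurrent A F \<longleftrightarrow> F \<subseteq> lists A \<and> F \<noteq> {} \<and> factors_of F \<subseteq> F \<and>
     (\<forall>u\<in>F. \<forall>w\<in>F. \<exists>v\<in>F. u @ v @ w \<in> F)"

definition prefix_code :: "'a list set \<Rightarrow> bool" where
  "prefix_code X \<longleftrightarrow> (\<forall>x\<in>X. \<forall>y\<in>X. \<forall>z. y = x @ z \<longrightarrow> z = [])"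

definition suffix_code :: "'a list set \<Rightarrow> bool" where
  "suffix_code X \<longleftrightarrow> (\<forall>x\<in>X. \<forall>y\<in>X. \<forall>z. y = z @ x \<longrightarrow> z = [])"

definition bifix_code :: "'a set \<Rightarrow> 'a list set \<Rightarrow> bool" where
  "bifix_code A X \<longleftrightarrow> X \<subseteq> lists A - {[]} \<and> prefix_code X \<and> suffix_code X"

definition F_maximal_bifix :: "'a set \<Rightarrow> 'a list set \<Rightarrow> 'a list set \<Rightarrow> bool" where
  "F_maximal_bifix A F X \<longleftrightarrow> bifix_code A X \<and> X \<subseteq> F \<and>
     \<not> (\<exists>Y. bifix_code A Y \<and> Y \<subseteq> F \<and> X \<subset> Y)"

definition F_thin :: "'a list set \<Rightarrow> 'a list set \<Rightarrow> bool" where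
  "F_thin F X \<longleftrightarrow> (\<exists>w\<in>F. w \<notin> factors_of X)"

definition kstar :: "'a list set \<Rightarrow> 'a list set" where
  "kstar X = {concat xs | xs. set xs \<subseteq> X}"

definition parses :: "'a set \<Rightarrow> 'a list set \<Rightarrow> 'a list \<Rightarrow> ('a list \<times> 'a list \<times> 'a list) set" where
  "parses A X w = {(v, x, u). w = v @ x @ u
      \<and> v \<in> lists A \<and> \<not> (\<exists>p y. v = p @ y \<and> y \<in> X)
      \<and> x \<in> kstar X
      \<and> u \<in> lists A \<and> \<not> (\<exists>y s. u = y @ s \<and> y \<in> X)}"

definition delta :: "'a set \<Rightarrow> 'a list set \<Rightarrow> 'a list \<Rightarrow> nat" where
  "delta A X w = card (parses A X w)"

definition F_degree :: "'a set \<Rightarrow> 'a list set \<Rightarrow> 'a list set \<Rightarrow> enat" where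
  "F_degree A F X = (SUP w\<in>F. enat (delta A X w))"

definition internal_factors :: "'a set \<Rightarrow> 'a list set \<Rightarrow> 'a list set" where
  "internal_factors A X = {w \<in> lists A. \<exists>p s. p \<noteq> [] \<and> s \<noteq> [] \<and> p \<in> lists A \<and> s \<in> lists A \<and> p @ w @ s \<in> X}"

end

theory Submission
  imports Defs "HOL-Library.Sublist"
begin

(* For a bifix code X, a parse (v, x, u) of a word t is determined by its left
   component v, and the possible left components are exactly the prefixes of t
   having no suffix in X; symmetrically for the right component u.  Hence
   delta X t counts such prefixes (or suffixes) of t.  This gives monotonicity
   of delta under extension, strict growth when a word of X properly contains a
   factor, and a "saturation" property: if extending t to t @ s does not raise
   delta, then every left component of t @ s is a prefix of t.

   (1) If X is F-thin and F-maximal, a word of F that is not a factor of X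
       bounds delta on F by its length plus one (by counting suffixes or
       prefixes after embedding a given word of F next to it by recurrence).
   (2) If the degree is finite it is attained by some z in F; saturation around
       z shows that X is F-maximal, that X is F-thin, and that the internal
       factors of X are exactly the words of F with delta below delta z. *)

definition no_suffix_in :: "'a list set \<Rightarrow> 'a list \<Rightarrow> bool" where
  "no_suffix_in X v \<longleftrightarrow> \<not> (\<exists>p y. v = p @ y \<and> y \<in> X)"

definition no_prefix_in :: "'a list set \<Rightarrow> 'a list \<Rightarrow> bool" where
  "no_prefix_in X u \<longleftrightarrow> \<not> (\<exists>y s. u = y @ s \<and> y \<in> X)"

lemma parses_iff:
  "(v, x, u) \<in> parses A X t \<longleftrightarrow> t = v @ x @ u \<and> v \<in> lists A \<and> no_suffix_in X v
      \<and> x \<in> kstar X \<and> u \<in> lists A \<and> no_prefix_in X u"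
  by (simp add: parses_def no_suffix_in_def no_prefix_in_def)

lemma kstar_iff: "x \<in> kstar X \<longleftrightarrow> (\<exists>xs. x = concat xs \<and> set xs \<subseteq> X)"
  by (auto simp: kstar_def)

lemma kstar_Nil: "[] \<in> kstar X"
  by (auto simp: kstar_iff intro: exI[of _ "[]"])

lemma kstar_Cons: "y \<in> X \<Longrightarrow> x \<in> kstar X \<Longrightarrow> y @ x \<in> kstar X"
  unfolding kstar_iff by (metis concat.simps(2) insert_subset list.simps(15))

lemma kstar_snoc: "y \<in> X \<Longrightarrow> x \<in> kstar X \<Longrightarrow> x @ y \<in> kstar X"
  unfolding kstar_iff by (metis concat_append concat.simps append_Nil2 set_append
      Un_subset_iff empty_subsetI insert_subset list.simps(15) set_empty)

lemma suffix_code_suffixes_eq: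
  "suffix_code X \<Longrightarrow> x \<in> X \<Longrightarrow> y \<in> X \<Longrightarrow> suffix x t \<Longrightarrow> suffix y t \<Longrightarrow> x = y"
  unfolding suffix_code_def by (metis suffix_def suffix_same_cases append_Nil)

lemma prefix_code_prefixes_eq:
  "prefix_code X \<Longrightarrow> x \<in> X \<Longrightarrow> y \<in> X \<Longrightarrow> prefix x t \<Longrightarrow> prefix y t \<Longrightarrow> x = y"
  unfolding prefix_code_def
  by (metis prefix_def prefix_same_cases append_Nil2)

lemma prefix_code_factorization_unique:
  assumes pc: "prefix_code X"
  shows "set xs \<subseteq> X \<Longrightarrow> set ys \<subseteq> X \<Longrightarrow> no_prefix_in X u \<Longrightarrow> no_prefix_in X u'
    \<Longrightarrow> concat xs @ u = concat ys @ u' \<Longrightarrow> concat xs = concat ys"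
proof (induction xs arbitrary: ys)
  case Nil
  then show ?case by (cases ys) (auto simp: no_prefix_in_def)
next
  case (Cons x xs)
  then obtain y ys' where ys: "ys = y # ys'"
    by (cases ys) (auto simp: no_prefix_in_def)
  have eq: "x @ (concat xs @ u) = y @ (concat ys' @ u')" using Cons.prems(5) ys by simp
  have "x \<in> X" "y \<in> X" using Cons.prems ys by auto
  then have "x = y" using prefix_code_prefixes_eq[OF pc] eq by (metis prefixI)
  with Cons ys show ?case by auto
qed

lemma suffix_code_factorization_unique:
  assumes sc: "suffix_code X"
  shows "set xs \<subseteq> X \<Longrightarrow> set ys \<subseteq> X \<Longrightarrow> no_suffix_in X v \<Longrightarrow> no_suffix_in X v'
    \<Longrightarrow> v @ concat xs = v' @ concat ys \<Longrightarrow> concat xs = concat ys"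
proof (induction xs arbitrary: ys rule: rev_induct)
  case Nil
  then show ?case by (cases ys rule: rev_exhaust) (auto simp: no_suffix_in_def)
next
  case (snoc x xs)
  then obtain ys' y where ys: "ys = ys' @ [y]"
    by (cases ys rule: rev_exhaust) (auto simp: no_suffix_in_def)
  have eq: "(v @ concat xs) @ x = (v' @ concat ys') @ y" using snoc.prems(5) ys by simp
  have "x \<in> X" "y \<in> X" using snoc.prems ys by auto
  then have "x = y" using suffix_code_suffixes_eq[OF sc] eq by (metis suffixI)
  with snoc ys show ?case by auto
qed

lemma factorization_right_exists:
  assumes "[] \<notin> X"
  shows "\<exists>x u. x \<in> kstar X \<and> no_prefix_in X u \<and> r = x @ u"
proof (induction r rule: length_induct)
  case (1 r)
  show ?case
  proof (cases "no_prefix_in X r")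
    case True then show ?thesis using kstar_Nil by fastforce
  next
    case False
    then obtain y s where r: "r = y @ s" and y: "y \<in> X" by (auto simp: no_prefix_in_def)
    with assms have "length s < length r" by (cases y) auto
    then obtain x u where "x \<in> kstar X" "no_prefix_in X u" "s = x @ u" using 1 by blast
    with r y show ?thesis by (intro exI[of _ "y @ x"] exI[of _ u]) (simp add: kstar_Cons)
  qed
qed

lemma factorization_left_exists:
  assumes "[] \<notin> X"
  shows "\<exists>v x. x \<in> kstar X \<and> no_suffix_in X v \<and> r = v @ x"
proof (induction r rule: length_induct)
  case (1 r)
  show ?case
  proof (cases "no_suffix_in X r")
    case True then show ?thesis using kstar_Nil by fastforce
  next
    case False
    then obtain y s where r: "r = s @ y" and y: "y \<in> X" by (auto simp: no_suffix_in_def)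
    with assms have "length s < length r" by (cases y) auto
    then obtain v x where "x \<in> kstar X" "no_suffix_in X v" "s = v @ x" using 1 by blast
    with r y show ?thesis by (intro exI[of _ v] exI[of _ "x @ y"]) (simp add: kstar_snoc)
  qed
qed

section \<open>Counting parses by their left or right components\<close>

definition left_parts :: "'a list set \<Rightarrow> 'a list \<Rightarrow> 'a list set" where
  "left_parts X t = {v. prefix v t \<and> no_suffix_in X v}"

definition right_parts :: "'a list set \<Rightarrow> 'a list \<Rightarrow> 'a list set" where
  "right_parts X t = {u. suffix u t \<and> no_prefix_in X u}"

lemma card_prefixes_le: "card {v. prefix v t} \<le> length t + 1"
proof -
  have "{v. prefix v t} = set (prefixes t)" by auto
  then show ?thesis using card_length[of "prefixes t"] by simp
qed

lemma card_suffixes_le: "card {u. suffix u t} \<le> length t + 1"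
proof -
  have "{u. suffix u t} = set (suffixes t)" by auto
  then show ?thesis using card_length[of "suffixes t"] by simp
qed

lemma finite_left_parts: "finite (left_parts X t)"
  by (rule finite_subset[of _ "set (prefixes t)"]) (auto simp: left_parts_def)

lemma finite_right_parts: "finite (right_parts X t)"
  by (rule finite_subset[of _ "set (suffixes t)"]) (auto simp: right_parts_def)

lemma parse_determined_by_left:
  assumes pc: "prefix_code X"
    and p: "(v, x, u) \<in> parses A X t" "(v, x', u') \<in> parses A X t"
  shows "x = x' \<and> u = u'"
proof -
  obtain xs ys where "x = concat xs" "set xs \<subseteq> X" "x' = concat ys" "set ys \<subseteq> X"
    using p by (auto simp: parses_iff kstar_iff)
  moreover have t: "t = v @ x @ u" "t = v @ x' @ u'" "no_prefix_in X u" "no_prefix_in X u'"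
    using p by (auto simp: parses_iff)
  ultimately have "x = x'" using prefix_code_factorization_unique[OF pc] by simp
  with t show ?thesis by simp
qed

lemma parse_determined_by_right:
  assumes sc: "suffix_code X"
    and p: "(v, x, u) \<in> parses A X t" "(v', x', u) \<in> parses A X t"
  shows "v = v' \<and> x = x'"
proof -
  obtain xs ys where "x = concat xs" "set xs \<subseteq> X" "x' = concat ys" "set ys \<subseteq> X"
    using p by (auto simp: parses_iff kstar_iff)
  moreover have t: "t = v @ x @ u" "t = v' @ x' @ u" "no_suffix_in X v" "no_suffix_in X v'"
    using p by (auto simp: parses_iff)
  ultimately have "x = x'" using suffix_code_factorization_unique[OF sc] by simp
  with t show ?thesis by simp
qed

lemma delta_left_parts:
  assumes pc: "prefix_code X" and ne: "[] \<notin> X" and t: "t \<in> lists A"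
  shows "delta A X t = card (left_parts X t)"
proof -
  have "bij_betw fst (parses A X t) (left_parts X t)"
  proof (rule bij_betw_imageI)
    show "inj_on fst (parses A X t)"
    proof (rule inj_onI)
      fix a b assume "a \<in> parses A X t" "b \<in> parses A X t" "fst a = fst b"
      then show "a = b"
        using parse_determined_by_left[OF pc] by (cases a, cases b) simp
    qed
    show "fst ` parses A X t = left_parts X t"
    proof (intro equalityI subsetI)
      fix v assume "v \<in> fst ` parses A X t"
      then show "v \<in> left_parts X t" by (auto simp: parses_iff left_parts_def)
    next
      fix v assume "v \<in> left_parts X t"
      then obtain r where r: "t = v @ r" "no_suffix_in X v"
        by (auto simp: left_parts_def prefix_def)
      obtain x u where "x \<in> kstar X" "no_prefix_in X u" "r = x @ u"
        using factorization_right_exists[OF ne] by blast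
      with r t have "(v, x, u) \<in> parses A X t" by (auto simp: parses_iff)
      then show "v \<in> fst ` parses A X t" by force
    qed
  qed
  then show ?thesis unfolding delta_def by (rule bij_betw_same_card)
qed

lemma delta_right_parts:
  assumes sc: "suffix_code X" and ne: "[] \<notin> X" and t: "t \<in> lists A"
  shows "delta A X t = card (right_parts X t)"
proof -
  have "bij_betw (snd \<circ> snd) (parses A X t) (right_parts X t)"
  proof (rule bij_betw_imageI)
    show "inj_on (snd \<circ> snd) (parses A X t)"
    proof (rule inj_onI)
      fix a b assume "a \<in> parses A X t" "b \<in> parses A X t" "(snd \<circ> snd) a = (snd \<circ> snd) b"
      then show "a = b"
        using parse_determined_by_right[OF sc] by (cases a, cases b) simp
    qed
    show "(snd \<circ> snd) ` parses A X t = right_parts X t"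
    proof (intro equalityI subsetI)
      fix u assume "u \<in> (snd \<circ> snd) ` parses A X t"
      then obtain v x where "(v, x, u) \<in> parses A X t" by auto
      then show "u \<in> right_parts X t"
        by (auto simp: parses_iff right_parts_def intro: suffixI[of _ "v @ x", simplified])
    next
      fix u assume "u \<in> right_parts X t"
      then obtain l where l: "t = l @ u" "no_prefix_in X u"
        by (auto simp: right_parts_def suffix_def)
      obtain v x where "x \<in> kstar X" "no_suffix_in X v" "l = v @ x"
        using factorization_left_exists[OF ne] by blast
      with l t have "(v, x, u) \<in> parses A X t" by (auto simp: parses_iff)
      then show "u \<in> (snd \<circ> snd) ` parses A X t" by force
    qed
  qed
  then show ?thesis unfolding delta_def by (rule bij_betw_same_card)
qed

section \<open>Behaviour of delta under extension\<close>

context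
  fixes A :: "'a set" and X :: "'a list set"
  assumes bifix: "bifix_code A X"
begin

lemma bifix_code_props: "prefix_code X" "suffix_code X" "[] \<notin> X" "X \<subseteq> lists A"
  using bifix by (auto simp: bifix_code_def)

lemma delta_left: "t \<in> lists A \<Longrightarrow> delta A X t = card (left_parts X t)"
  using delta_left_parts bifix_code_props by blast

lemma delta_right: "t \<in> lists A \<Longrightarrow> delta A X t = card (right_parts X t)"
  using delta_right_parts bifix_code_props by blast

lemma delta_mono_append_right:
  assumes "t @ s \<in> lists A"
  shows "delta A X t \<le> delta A X (t @ s)"
proof -
  have "left_parts X t \<subseteq> left_parts X (t @ s)"
    by (auto simp: left_parts_def intro: prefix_append)
  then show ?thesis
    using assms delta_left[of t] delta_left[of "t @ s"] card_mono[OF finite_left_parts] by simp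
qed

lemma delta_mono_append_left:
  assumes "l @ t \<in> lists A"
  shows "delta A X t \<le> delta A X (l @ t)"
proof -
  have "right_parts X t \<subseteq> right_parts X (l @ t)"
    by (auto simp: right_parts_def intro: suffix_appendI)
  then show ?thesis
    using assms delta_right[of t] delta_right[of "l @ t"] card_mono[OF finite_right_parts] by simp
qed

lemma delta_mono_factor: "p @ w @ s \<in> lists A \<Longrightarrow> delta A X w \<le> delta A X (p @ w @ s)"
  using delta_mono_append_right[of w s] delta_mono_append_left[of p "w @ s"] by simp

lemma delta_saturated:
  assumes "t @ s \<in> lists A" and "delta A X (t @ s) \<le> delta A X t"
  shows "left_parts X (t @ s) = left_parts X t"
proof -
  have sub: "left_parts X t \<subseteq> left_parts X (t @ s)"
    by (auto simp: left_parts_def intro: prefix_append)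
  moreover have "card (left_parts X (t @ s)) \<le> card (left_parts X t)"
    using assms delta_left[of t] delta_left[of "t @ s"] by simp
  ultimately show ?thesis by (metis card_seteq finite_left_parts)
qed

lemma delta_strict_append_right:
  assumes "t @ s \<in> lists A" and "s \<noteq> []" and "no_suffix_in X (t @ s)"
  shows "delta A X t < delta A X (t @ s)"
proof (rule ccontr)
  assume "\<not> ?thesis"
  then have "left_parts X (t @ s) = left_parts X t"
    using assms(1) by (intro delta_saturated) auto
  moreover have "t @ s \<in> left_parts X (t @ s)" using assms(3) by (simp add: left_parts_def)
  ultimately have "prefix (t @ s) t" by (simp add: left_parts_def)
  with assms(2) show False by (auto dest: prefix_length_le)
qed

lemma delta_internal:
  assumes x: "p @ w @ s \<in> X" and "p \<noteq> []" and "s \<noteq> []"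
  shows "delta A X w < delta A X (p @ w @ s)"
proof -
  have xA: "p @ w @ s \<in> lists A" using x bifix_code_props(4) by blast
  have "no_suffix_in X (w @ s)"
  proof (unfold no_suffix_in_def, clarify)
    fix q y assume "w @ s = q @ y" "y \<in> X"
    then have "p @ w @ s = (p @ q) @ y" by simp
    with bifix_code_props(2) x \<open>y \<in> X\<close> have "p @ q = []" unfolding suffix_code_def by blast
    with \<open>p \<noteq> []\<close> show False by simp
  qed
  then have "delta A X w < delta A X (w @ s)"
    using xA \<open>s \<noteq> []\<close> by (intro delta_strict_append_right) auto
  also have "\<dots> \<le> delta A X (p @ w @ s)" using xA by (intro delta_mono_append_left) simp
  finally show ?thesis .
qed

end

lemma internal_factors_iff:
  "X \<subseteq> lists A \<Longrightarrow>
    w \<in> internal_factors A X \<longleftrightarrow> (\<exists>p s. p \<noteq> [] \<and> s \<noteq> [] \<and> p @ w @ s \<in> X)"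
  unfolding internal_factors_def by (auto 0 4 dest: subsetD)

lemma recurrent_factor: "recurrent A F \<Longrightarrow> p @ u @ s \<in> F \<Longrightarrow> u \<in> F"
  unfolding recurrent_def factors_of_def by blast

lemma recurrent_connect: "recurrent A F \<Longrightarrow> u \<in> F \<Longrightarrow> w \<in> F \<Longrightarrow> \<exists>v. u @ v @ w \<in> F"
  unfolding recurrent_def by blast

lemma factors_of_factor:
  assumes "p @ w @ s \<in> factors_of X"
  shows "w \<in> factors_of X"
proof -
  obtain x p' s' where "x \<in> X" "x = p' @ (p @ w @ s) @ s'"
    using assms unfolding factors_of_def by blast
  then have "x \<in> X" "x = (p' @ p) @ w @ (s @ s')" by simp_all
  then show ?thesis unfolding factors_of_def by blast
qed

lemma member_factors_of: "x \<in> X \<Longrightarrow> x = p @ w @ s \<Longrightarrow> w \<in> factors_of X"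
  unfolding factors_of_def by blast

section \<open>Thin maximal codes have finite degree\<close>

lemma bifix_code_insert:
  assumes b: "bifix_code A X" and y: "y \<in> lists A" "y \<noteq> []" "y \<notin> factors_of X"
    and ns: "no_suffix_in X y" and np: "no_prefix_in X y"
  shows "bifix_code A (insert y X)"
proof -
  have pc: "prefix_code X" and sc: "suffix_code X" and XA: "X \<subseteq> lists A - {[]}"
    using b by (auto simp: bifix_code_def)
  have nf: "x \<noteq> p @ y @ s" if "x \<in> X" for x p s
    using y(3) that unfolding factors_of_def by blast
  have "prefix_code (insert y X)"
    unfolding prefix_code_def
  proof (intro ballI allI impI)
    fix a c z assume "a \<in> insert y X" "c \<in> insert y X" and c: "c = a @ z"
    then consider "a = y" "c = y" | "a = y" "c \<in> X" | "a \<in> X" "c = y" | "a \<in> X" "c \<in> X"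
      by blast
    then show "z = []"
    proof cases
      case 2 then show ?thesis using nf[of c "[]" z] c by simp
    next
      case 3 then show ?thesis using np c by (auto simp: no_prefix_in_def)
    next
      case 4 then show ?thesis using pc c by (auto simp: prefix_code_def)
    qed (use c in simp)
  qed
  moreover have "suffix_code (insert y X)"
    unfolding suffix_code_def
  proof (intro ballI allI impI)
    fix a c z assume "a \<in> insert y X" "c \<in> insert y X" and c: "c = z @ a"
    then consider "a = y" "c = y" | "a = y" "c \<in> X" | "a \<in> X" "c = y" | "a \<in> X" "c \<in> X"
      by blast
    then show "z = []"
    proof cases
      case 2 then show ?thesis using nf[of c z "[]"] c by simp
    next
      case 3 then show ?thesis using ns c by (auto simp: no_suffix_in_def)
    next
      case 4 then show ?thesis using sc c by (auto simp: suffix_code_def)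
    qed (use c in simp)
  qed
  ultimately show ?thesis using XA y by (auto simp: bifix_code_def)
qed

lemma maximal_has_prefix:
  assumes m: "F_maximal_bifix A F X" and FA: "F \<subseteq> lists A" and y: "y \<in> F" "y \<noteq> []"
    "y \<notin> factors_of X" and ns: "no_suffix_in X y"
  shows "\<not> no_prefix_in X y"
proof
  assume np: "no_prefix_in X y"
  have b: "bifix_code A X" and XF: "X \<subseteq> F"
    and unextendable: "\<not> (\<exists>Y. bifix_code A Y \<and> Y \<subseteq> F \<and> X \<subset> Y)"
    using m unfolding F_maximal_bifix_def by blast+
  have "y \<notin> X" using ns unfolding no_suffix_in_def by (metis append_Nil)
  have "y \<in> lists A" using FA y(1) by blast
  then have "bifix_code A (insert y X)" using bifix_code_insert[OF b _ y(2,3) ns np] by blast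
  moreover have "insert y X \<subseteq> F" using XF y(1) by blast
  moreover have "X \<subset> insert y X" using \<open>y \<notin> X\<close> by blast
  ultimately show False using unextendable by blast
qed

text \<open>If every word of F ending with w properly has a prefix in X, delta is
  bounded on F: after extending t to t v w, every right component is a suffix
  of w.  Dually for words starting with w.\<close>

lemma delta_bound_right_anchor:
  assumes r: "recurrent A F" and b: "bifix_code A X" and w: "w \<in> F"
    and anchor: "\<And>us. us \<noteq> [] \<Longrightarrow> us @ w \<in> F \<Longrightarrow> \<not> no_prefix_in X (us @ w)"
    and t: "t \<in> F"
  shows "delta A X t \<le> length w + 1"
proof -
  obtain v where tvw: "t @ v @ w \<in> F" using recurrent_connect[OF r t w] by blast
  then have tvwA: "t @ v @ w \<in> lists A" using r by (auto simp: recurrent_def)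
  have "right_parts X (t @ v @ w) \<subseteq> {u. suffix u w}"
  proof
    fix u assume u: "u \<in> right_parts X (t @ v @ w)"
    then obtain l where l: "t @ v @ w = l @ u" by (auto simp: right_parts_def suffix_def)
    have "suffix u (t @ v @ w)" unfolding l by (simp add: suffix_def)
    then have "suffix u w \<or> suffix w u" by (rule suffix_same_cases) (simp add: suffix_def)
    moreover have "u \<in> F" using recurrent_factor[OF r, of l u "[]"] tvw l by simp
    moreover have "no_prefix_in X u" using u by (simp add: right_parts_def)
    ultimately show "u \<in> {u. suffix u w}"
      using anchor by (auto simp: suffix_def) blast
  qed
  then have "card (right_parts X (t @ v @ w)) \<le> card {u. suffix u w}"
    by (intro card_mono) (auto intro: finite_subset[of _ "set (suffixes w)"])
  also have "\<dots> \<le> length w + 1" by (rule card_suffixes_le)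
  finally have "delta A X (t @ v @ w) \<le> length w + 1"
    using delta_right[OF b tvwA] by simp
  moreover have "delta A X t \<le> delta A X (t @ v @ w)"
    using delta_mono_append_right[OF b, of t "v @ w"] tvwA by simp
  ultimately show ?thesis by simp
qed

lemma delta_bound_left_anchor:
  assumes r: "recurrent A F" and b: "bifix_code A X" and w: "w \<in> F"
    and anchor: "\<And>us. us \<noteq> [] \<Longrightarrow> w @ us \<in> F \<Longrightarrow> \<not> no_suffix_in X (w @ us)"
    and t: "t \<in> F"
  shows "delta A X t \<le> length w + 1"
proof -
  obtain v where wvt: "w @ v @ t \<in> F" using recurrent_connect[OF r w t] by blast
  then have wvtA: "w @ v @ t \<in> lists A" using r by (auto simp: recurrent_def)
  have "left_parts X (w @ v @ t) \<subseteq> {q. prefix q w}"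
  proof
    fix q assume q: "q \<in> left_parts X (w @ v @ t)"
    then obtain s where s: "w @ v @ t = q @ s" by (auto simp: left_parts_def prefix_def)
    have "prefix q (w @ v @ t)" unfolding s by simp
    then have "prefix q w \<or> prefix w q" by (rule prefix_same_cases) simp
    moreover have "q \<in> F" using recurrent_factor[OF r, of "[]" q s] wvt s by simp
    moreover have "no_suffix_in X q" using q by (simp add: left_parts_def)
    ultimately show "q \<in> {q. prefix q w}"
      using anchor by (auto simp: prefix_def) blast
  qed
  then have "card (left_parts X (w @ v @ t)) \<le> card {q. prefix q w}"
    by (intro card_mono) (auto intro: finite_subset[of _ "set (prefixes w)"])
  also have "\<dots> \<le> length w + 1" by (rule card_prefixes_le)
  finally have "delta A X (w @ v @ t) \<le> length w + 1"
    using delta_left[OF b wvtA] by simp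
  moreover have "delta A X t \<le> delta A X ((w @ v) @ t)"
    using delta_mono_append_left[OF b, of "w @ v" t] wvtA by simp
  ultimately show ?thesis by simp
qed

text \<open>Take w in F not a factor of X.
  If some such w has no suffix in X, the words us @ w of F are again non-factors
  without suffix in X, so by maximality they have a prefix in X.  Otherwise every
  non-factor of F, in particular every w @ us, has a suffix in X.\<close>

lemma thin_maximal_delta_bounded:
  assumes r: "recurrent A F" and thin: "F_thin F X" and m: "F_maximal_bifix A F X"
  shows "\<exists>k. \<forall>t\<in>F. delta A X t \<le> k"
proof -
  have b: "bifix_code A X" and FA: "F \<subseteq> lists A"
    using m r by (auto simp: F_maximal_bifix_def recurrent_def)
  have nonfactor_ext: "w @ us \<notin> factors_of X" "us @ w \<notin> factors_of X"
    if "w \<notin> factors_of X" for w us :: "'a list"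
    using that factors_of_factor[of "[]" w us X] factors_of_factor[of us w "[]" X] by auto
  show ?thesis
  proof (cases "\<exists>w\<in>F. w \<notin> factors_of X \<and> no_suffix_in X w")
    case True
    then obtain w where w: "w \<in> F" "w \<notin> factors_of X" "no_suffix_in X w" by blast
    have "\<not> no_prefix_in X (us @ w)" if "us \<noteq> []" "us @ w \<in> F" for us
    proof (rule maximal_has_prefix[OF m FA that(2)])
      show "us @ w \<noteq> []" using that by simp
      show "us @ w \<notin> factors_of X" using nonfactor_ext(2) w(2) .
      show "no_suffix_in X (us @ w)"
      proof (unfold no_suffix_in_def, clarify)
        fix p x assume px: "us @ w = p @ x" and x: "x \<in> X"
        have "suffix x (us @ w)" unfolding px by (simp add: suffix_def)
        then have "suffix x w \<or> suffix w x" by (rule suffix_same_cases) (simp add: suffix_def)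
        then show False
        proof
          assume "suffix x w"
          with w(3) x show False by (auto simp: no_suffix_in_def suffix_def)
        next
          assume "suffix w x"
          then obtain r where "x = r @ w @ []" by (auto simp: suffix_def)
          with w(2) x show False using member_factors_of by blast
        qed
      qed
    qed
    then show ?thesis using delta_bound_right_anchor[OF r b w(1)] by blast
  next
    case False
    obtain w where w: "w \<in> F" "w \<notin> factors_of X" using thin by (auto simp: F_thin_def)
    have "\<not> no_suffix_in X (w @ us)" if "w @ us \<in> F" for us
      using False that nonfactor_ext(1)[OF w(2)] by blast
    then show ?thesis using delta_bound_left_anchor[OF r b w(1)] by blast
  qed
qed

section \<open>Codes of finite degree\<close>

lemma finite_degree_iff_bounded:
  "F_degree A F X < \<infinity> \<longleftrightarrow> (\<exists>k. \<forall>t\<in>F. delta A X t \<le> k)"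
proof
  assume "F_degree A F X < \<infinity>"
  then obtain k where k: "F_degree A F X = enat k" by (cases "F_degree A F X") auto
  have "enat (delta A X t) \<le> F_degree A F X" if "t \<in> F" for t
    unfolding F_degree_def using that by (rule SUP_upper)
  with k show "\<exists>k. \<forall>t\<in>F. delta A X t \<le> k" by auto
next
  assume "\<exists>k. \<forall>t\<in>F. delta A X t \<le> k"
  then obtain k where "\<forall>t\<in>F. delta A X t \<le> k" by blast
  then have "F_degree A F X \<le> enat k" unfolding F_degree_def by (auto intro: SUP_least)
  then show "F_degree A F X < \<infinity>" using enat_ord_simps(4) le_less_trans by blast
qed

lemma finite_degree_attained:
  assumes "F \<noteq> {}" and "F_degree A F X < \<infinity>"
  obtains z where "z \<in> F" "\<forall>t\<in>F. delta A X t \<le> delta A X z"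
    "F_degree A F X = enat (delta A X z)"
proof -
  obtain k where "\<forall>t\<in>F. delta A X t \<le> k" using assms(2) finite_degree_iff_bounded by blast
  then have fin: "finite (delta A X ` F)" by (auto intro: finite_subset[of _ "{..k}"])
  then have "Max (delta A X ` F) \<in> delta A X ` F" using assms(1) by simp
  then obtain z where "z \<in> F" "delta A X z = Max (delta A X ` F)" by (metis imageE)
  with fin have z: "z \<in> F" "\<forall>t\<in>F. delta A X t \<le> delta A X z" by auto
  have "F_degree A F X \<le> enat (delta A X z)"
    unfolding F_degree_def using z(2) by (intro SUP_least) simp
  moreover have "enat (delta A X z) \<le> F_degree A F X"
    unfolding F_degree_def using z(1) by (rule SUP_upper)
  ultimately have "F_degree A F X = enat (delta A X z)" by (rule antisym)
  with z that show ?thesis by blast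
qed

text \<open>Key step for the internal factors: suppose extending L by w @ R creates no
  new left component.  If w is not an internal factor of X, then neither does
  extending w by R: a new left component w @ us of w @ R would make L @ w @ us
  a new left component of L @ w @ R unless some word of X is a suffix of
  L @ w @ us, and such a word would contain w internally.\<close>

lemma left_parts_extension_not_internal:
  assumes sat: "left_parts X (L @ w @ R) \<subseteq> {v. prefix v L}"
    and not_internal: "\<And>p s. p \<noteq> [] \<Longrightarrow> s \<noteq> [] \<Longrightarrow> p @ w @ s \<notin> X"
  shows "left_parts X (w @ R) \<subseteq> left_parts X w"
proof
  fix q assume q: "q \<in> left_parts X (w @ R)"
  then have ns: "no_suffix_in X q" and "prefix q (w @ R)" by (auto simp: left_parts_def)
  from \<open>prefix q (w @ R)\<close> have cases: "prefix q w \<or> prefix w q"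
    by (rule prefix_same_cases) simp
  have no_proper_extension: False if q_eq: "q = w @ us" and us_ne: "us \<noteq> []" for us
  proof -
    have "\<not> no_suffix_in X (L @ q)"
    proof
      assume "no_suffix_in X (L @ q)"
      moreover have "prefix (L @ q) (L @ w @ R)" using \<open>prefix q (w @ R)\<close> by simp
      ultimately have "L @ q \<in> left_parts X (L @ w @ R)" by (simp add: left_parts_def)
      with sat have "prefix (L @ q) L" by blast
      with us_ne q_eq show False by (auto dest: prefix_length_le)
    qed
    then obtain p y where py: "L @ q = p @ y" and y: "y \<in> X"
      by (auto simp: no_suffix_in_def)
    have "suffix y (L @ q)" unfolding py by (simp add: suffix_def)
    then have "suffix y q \<or> suffix q y" by (rule suffix_same_cases) (simp add: suffix_def)
    then show False
    proof
      assume "suffix y q"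
      with ns y show False by (auto simp: no_suffix_in_def suffix_def)
    next
      assume "suffix q y"
      then obtain u' where u': "y = u' @ w @ us" using q_eq by (auto simp: suffix_def)
      show False
      proof (cases "u' = []")
        case True
        with u' q_eq ns y show False by (auto simp: no_suffix_in_def)
      next
        case False
        with not_internal[OF False us_ne] u' y show False by simp
      qed
    qed
  qed
  have "prefix q w"
  proof (cases "prefix w q")
    case True
    then obtain us where "q = w @ us" by (auto simp: prefix_def)
    with no_proper_extension show ?thesis by (cases "us = []") auto
  next
    case False
    with cases show ?thesis by simp
  qed
  with ns show "q \<in> left_parts X w" by (simp add: left_parts_def)
qed

context
  fixes A :: "'a set" and F X :: "'a list set" and z :: "'a list"
  assumes rec: "recurrent A F" and bifix: "bifix_code A X" and XF: "X \<subseteq> F"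
    and z: "z \<in> F" and z_max: "\<forall>t\<in>F. delta A X t \<le> delta A X z"
begin

lemma F_lists: "F \<subseteq> lists A"
  using rec by (simp add: recurrent_def)

lemmas internal_iff = internal_factors_iff[OF bifix_code_props(4)[OF bifix]]

text \<open>If X \<subset> Y with y in Y - X, extend z to z v y in F.  As delta cannot grow,
  z v y has a suffix in X, which must coincide with the suffix y in the suffix
  code Y.\<close>

lemma max_delta_maximal: "F_maximal_bifix A F X"
proof -
  have "\<not> (\<exists>Y. bifix_code A Y \<and> Y \<subseteq> F \<and> X \<subset> Y)"
  proof
    assume "\<exists>Y. bifix_code A Y \<and> Y \<subseteq> F \<and> X \<subset> Y"
    then obtain Y y where Y: "bifix_code A Y" "Y \<subseteq> F" "X \<subseteq> Y" and y: "y \<in> Y" "y \<notin> X"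
      by blast
    have "y \<noteq> []" using Y(1) y(1) by (auto simp: bifix_code_def)
    obtain v where zvy: "z @ v @ y \<in> F" using recurrent_connect[OF rec z, of y] Y(2) y(1) by blast
    have "\<not> no_suffix_in X (z @ v @ y)"
    proof
      assume "no_suffix_in X (z @ v @ y)"
      moreover have "z @ v @ y \<in> lists A" using zvy F_lists by blast
      ultimately have "delta A X z < delta A X (z @ v @ y)"
        using delta_strict_append_right[OF bifix, of z "v @ y"] \<open>y \<noteq> []\<close> by simp
      moreover have "delta A X (z @ v @ y) \<le> delta A X z" using z_max zvy by blast
      ultimately show False by simp
    qed
    then obtain p x where x: "z @ v @ y = p @ x" "x \<in> X" by (auto simp: no_suffix_in_def)
    have "suffix x (z @ v @ y)" unfolding x by (simp add: suffix_def)
    moreover have "suffix y (z @ v @ y)" by (simp add: suffix_def)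
    moreover have "suffix_code Y" using Y(1) by (simp add: bifix_code_def)
    moreover have "x \<in> Y" using Y(3) x(2) by blast
    ultimately have "x = y" using suffix_code_suffixes_eq y(1) by blast
    with x(2) y(2) show False by simp
  qed
  with bifix XF show ?thesis by (simp add: F_maximal_bifix_def)
qed

lemma internal_factor_below_max:
  assumes "w \<in> internal_factors A X"
  shows "w \<in> F \<and> delta A X w < delta A X z"
proof -
  obtain p s where ps: "p \<noteq> []" "s \<noteq> []" "p @ w @ s \<in> X"
    using assms unfolding internal_iff by blast
  then have x: "p @ w @ s \<in> F" using XF by blast
  then have "w \<in> F" by (rule recurrent_factor[OF rec])
  moreover have "delta A X (p @ w @ s) \<le> delta A X z" using z_max x by blast
  ultimately show ?thesis using delta_internal[OF bifix ps(3,1,2)] by simp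
qed

text \<open>Thinness: for a letter a of F, a word a m a of F with z a factor of m
  has delta m = delta z, so m is not an internal factor of X and a m a is not
  a factor of X.\<close>

lemma max_delta_thin: "F_thin F X"
proof (cases "F \<subseteq> {[]}")
  case True
  then have "X = {}" using XF bifix by (auto simp: bifix_code_def)
  moreover have "F \<noteq> {}" using rec by (simp add: recurrent_def)
  ultimately show ?thesis using True by (auto simp: F_thin_def factors_of_def)
next
  case False
  then obtain t where "t \<in> F" "t \<noteq> []" by blast
  then obtain a t' where "a # t' \<in> F" by (cases t) auto
  then have a: "[a] \<in> F" using recurrent_factor[OF rec, of "[]" "[a]" t'] by simp
  obtain v1 where "[a] @ v1 @ z \<in> F" using recurrent_connect[OF rec a z] by blast
  then obtain v2 where "([a] @ v1 @ z) @ v2 @ [a] \<in> F"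
    using recurrent_connect[OF rec _ a] by blast
  then have ama: "[a] @ (v1 @ z @ v2) @ [a] \<in> F" by simp
  define m where "m = v1 @ z @ v2"
  have mF: "m \<in> F" using recurrent_factor[OF rec ama] by (simp add: m_def)
  have "delta A X z \<le> delta A X m"
    unfolding m_def using mF F_lists by (intro delta_mono_factor[OF bifix]) (auto simp: m_def)
  then have "m \<notin> internal_factors A X" using internal_factor_below_max by (meson leD)
  have "[a] @ m @ [a] \<notin> factors_of X"
  proof
    assume "[a] @ m @ [a] \<in> factors_of X"
    then obtain x p s where "x \<in> X" "x = p @ ([a] @ m @ [a]) @ s"
      unfolding factors_of_def by blast
    then have "(p @ [a]) @ m @ ([a] @ s) \<in> X" by simp
    then have "m \<in> internal_factors A X"
      unfolding internal_iff by (intro exI[of _ "p @ [a]"] exI[of _ "[a] @ s"]) simp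
    with \<open>m \<notin> internal_factors A X\<close> show False ..
  qed
  with ama show ?thesis by (auto simp: F_thin_def m_def)
qed

text \<open>Conversely, a word w of F with delta w < delta z is an internal factor:
  otherwise, embedding w between two copies of z by recurrence and using
  saturation on the left copy forces delta (w @ R) \<le> delta w, while the right
  copy forces delta (w @ R) \<ge> delta z.\<close>

lemma below_max_internal_factor:
  assumes wF: "w \<in> F" and lt: "delta A X w < delta A X z"
  shows "w \<in> internal_factors A X"
proof (rule ccontr)
  assume "w \<notin> internal_factors A X"
  then have not_internal: "\<And>p s. p \<noteq> [] \<Longrightarrow> s \<noteq> [] \<Longrightarrow> p @ w @ s \<notin> X"
    unfolding internal_iff by blast
  obtain v1 where "z @ v1 @ w \<in> F" using recurrent_connect[OF rec z wF] by blast
  then obtain v2 where "(z @ v1 @ w) @ v2 @ z \<in> F" using recurrent_connect[OF rec _ z] by blast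
  then have LwR: "(z @ v1) @ w @ (v2 @ z) \<in> F" (is "?L @ w @ ?R \<in> F") by simp
  have LwRA: "?L @ w @ ?R \<in> lists A" using LwR F_lists by blast
  then have LA: "?L \<in> lists A" and wRA: "w @ ?R \<in> lists A" and wA: "w \<in> lists A" by simp_all
  have "delta A X (?L @ w @ ?R) \<le> delta A X z" using z_max LwR by blast
  also have "delta A X z \<le> delta A X ?L"
    using delta_mono_append_right[OF bifix LA] .
  finally have "left_parts X (?L @ w @ ?R) = left_parts X ?L"
    by (rule delta_saturated[OF bifix LwRA])
  then have "left_parts X (?L @ w @ ?R) \<subseteq> {v. prefix v ?L}"
    unfolding left_parts_def by blast
  then have "left_parts X (w @ ?R) \<subseteq> left_parts X w"
    using not_internal by (rule left_parts_extension_not_internal)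
  then have "delta A X (w @ ?R) \<le> delta A X w"
    using card_mono[OF finite_left_parts] delta_left[OF bifix wRA] delta_left[OF bifix wA]
    by simp
  moreover have "delta A X z \<le> delta A X ((w @ v2) @ z)"
    using wRA by (intro delta_mono_append_left[OF bifix]) simp
  ultimately show False using lt by simp
qed

lemma internal_factors_below_max:
  "internal_factors A X = {w \<in> F. delta A X w < delta A X z}"
  using internal_factor_below_max below_max_internal_factor by blast

end

theorem mainTheorem2:
  fixes A :: "'a set" and F X :: "'a list set"
  assumes "finite A"
    and "recurrent A F"
    and "bifix_code A X"
    and "X \<subseteq> F"
  shows "((F_thin F X \<and> F_maximal_bifix A F X) \<longleftrightarrow> F_degree A F X < \<infinity>) \<and>
         (F_degree A F X < \<infinity> \<longrightarrow>
           internal_factors A X = {w \<in> F. enat (delta A X w) < F_degree A F X})"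
proof -
  have F_ne: "F \<noteq> {}" using assms(2) by (simp add: recurrent_def)
  have "F_degree A F X < \<infinity>" if "F_thin F X" "F_maximal_bifix A F X"
    using thin_maximal_delta_bounded[OF assms(2) that] finite_degree_iff_bounded by blast
  moreover have "F_thin F X \<and> F_maximal_bifix A F X \<and>
      internal_factors A X = {w \<in> F. enat (delta A X w) < F_degree A F X}"
    if finite_degree: "F_degree A F X < \<infinity>"
  proof -
    obtain z where z: "z \<in> F" "\<forall>t\<in>F. delta A X t \<le> delta A X z"
      and degree: "F_degree A F X = enat (delta A X z)"
      using finite_degree_attained[OF F_ne finite_degree] by blast
    show ?thesis
      using max_delta_thin[OF assms(2-4) z] max_delta_maximal[OF assms(2-4) z]
        internal_factors_below_max[OF assms(2-4) z] degree by simp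
  qed
  ultimately show ?thesis by blast
qed

end
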